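(* Let $n>24$, $\beta>\frac{\log 3}{\log n}$, $\lambda>\frac12$, and $m=n^{1/2+\beta+\lambda}$ (assumed to be an integer). Then $$\mathsf P\left\{\left|\sum_{i=1}^n \frac{k_i(x)(k_i(x)-1)}{m(m-1)}\cdot\frac{1}{\|p\|^2}-1\right|\le \frac{22}{5}\,n^{-\beta/2}\right\}\ \ge\ 1-\frac{10}{9}e^{-n^{\lambda-1/2}}.$$
   Context: Standing setup: $U$ is a finite set (the key space) with a probability measure $q$; $T=\{1,\dots,n\}$; $h:U\to T$ is an arbitrary function. $p_i=\sum_{u\in h^{-1}(i)}q(u)$ and $\|p\|^2=\sum_{i=1}^n p_i^2$. $U^m$ carries the product measure $q^m$, and $\mathsf P$ denotes probability under $q^m$ of the event for $x=(x_1,\dots,x_m)\in U^m$. $k_i(x)=|\{j: h(x_j)=i\}|$. *)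

theory Defs
  imports "HOL-Analysis.Analysis"
begin

text \<open>Key space U (finite) with probability weights q; hash h : U -> {1..n}.
  Samples x in U^m are functions on {0..<m} (extensional elsewhere).\<close>

definition bucket_prob :: "'a set \<Rightarrow> ('a \<Rightarrow> real) \<Rightarrow> ('a \<Rightarrow> nat) \<Rightarrow> nat \<Rightarrow> real" where
  "bucket_prob U q h i = (\<Sum>u\<in>{u\<in>U. h u = i}. q u)"

definition sq_norm_p :: "'a set \<Rightarrow> ('a \<Rightarrow> real) \<Rightarrow> ('a \<Rightarrow> nat) \<Rightarrow> nat \<Rightarrow> real" where
  "sq_norm_p U q h n = (\<Sum>i=1..n. (bucket_prob U q h i)^2)"

definition load :: "('a \<Rightarrow> nat) \<Rightarrow> nat \<Rightarrow> (nat \<Rightarrow> 'a) \<Rightarrow> nat \<Rightarrow> nat" where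
  "load h m x i = card {j\<in>{..<m}. h (x j) = i}"

definition prob_prod :: "'a set \<Rightarrow> ('a \<Rightarrow> real) \<Rightarrow> nat \<Rightarrow> ((nat \<Rightarrow> 'a) \<Rightarrow> bool) \<Rightarrow> real" where
  "prob_prod U q m E = (\<Sum>x\<in>{x\<in>PiE {..<m} (\<lambda>_. U). E x}. \<Prod>j<m. q (x j))"

end

theory Submission
  imports Defs
begin

text \<open>The normalised collision count is the U-statistic \<open>U\<close> of order two with kernel
  \<open>[h u = h v]\<close>, whose mean is \<open>\<parallel>p\<parallel>\<^sup>2\<close>. Hoeffding's representation writes \<open>r U\<close>, with
  \<open>r = \<lfloor>m/2\<rfloor>\<close>, as the average over all permutations of sums of \<open>r\<close> kernel values on disjoint,
  hence independent, pairs of the sample. By Jensen's inequality the moment generating function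
  of \<open>r U\<close> is therefore at most that of a sum of \<open>r\<close> independent Bernoulli(\<open>\<parallel>p\<parallel>\<^sup>2\<close>)
  variables, and a two-sided Chernoff bound gives deviation probability at most
  \<open>2 exp (-(2/9) r \<parallel>p\<parallel>\<^sup>2 t\<^sup>2)\<close> for relative deviations \<open>t \<le> 3\<close>. For the given parameters,
  \<open>\<parallel>p\<parallel>\<^sup>2 \<ge> 1/n\<close> (Cauchy-Schwarz) makes this exponent exceed \<open>n powr (\<lambda> - 1/2) + 1\<close>.\<close>

definition expect_prod :: "'a set \<Rightarrow> ('a \<Rightarrow> real) \<Rightarrow> nat \<Rightarrow> ((nat \<Rightarrow> 'a) \<Rightarrow> real) \<Rightarrow> real" where
  "expect_prod U q m g = (\<Sum>x\<in>PiE {..<m} (\<lambda>_. U). (\<Prod>j<m. q (x j)) * g x)"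

definition pair_mean :: "'a set \<Rightarrow> ('a \<Rightarrow> real) \<Rightarrow> ('a \<Rightarrow> 'a \<Rightarrow> real) \<Rightarrow> real" where
  "pair_mean U q f = (\<Sum>u\<in>U. \<Sum>v\<in>U. q u * q v * f u v)"

definition ustat :: "nat \<Rightarrow> ('a \<Rightarrow> 'a \<Rightarrow> real) \<Rightarrow> (nat \<Rightarrow> 'a) \<Rightarrow> real" where
  "ustat m f x = (\<Sum>j<m. \<Sum>l\<in>{..<m}-{j}. f (x j) (x l)) / (real m * (real m - 1))"

lemma sum_PiE_insert:
  assumes "a \<notin> J"
  shows "(\<Sum>x\<in>PiE (insert a J) (\<lambda>_. U). F x) = (\<Sum>u\<in>U. \<Sum>x\<in>PiE J (\<lambda>_. U). F (x(a := u)))"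
  using sum.reindex[OF inj_combinator[OF assms, of "\<lambda>_. U"], of F]
  by (simp add: PiE_insert_eq sum.cartesian_product split_def)

lemma sum_PiE_pair_factor:
  fixes q :: "'a \<Rightarrow> real"
  assumes "finite I" "a \<noteq> b" "a \<notin> I" "b \<notin> I"
    and G: "\<And>x y. (\<And>i. i \<in> I \<Longrightarrow> x i = y i) \<Longrightarrow> G x = G y"
  shows "(\<Sum>x\<in>PiE (insert a (insert b I)) (\<lambda>_. U).
           (\<Prod>j\<in>insert a (insert b I). q (x j)) * (\<phi> (x a) (x b) * G x))
       = pair_mean U q \<phi> * (\<Sum>x\<in>PiE I (\<lambda>_. U). (\<Prod>j\<in>I. q (x j)) * G x)"
proof -
  define F where "F x = (\<Prod>j\<in>insert a (insert b I). q (x j)) * (\<phi> (x a) (x b) * G x)" for x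
  have upd: "F (x(b := v, a := u)) = (q u * q v * \<phi> u v) * ((\<Prod>j\<in>I. q (x j)) * G x)" for x u v
  proof -
    have "(\<Prod>j\<in>insert a (insert b I). q ((x(b := v, a := u)) j)) = q u * (q v * (\<Prod>j\<in>I. q (x j)))"
      using assms by (auto intro!: prod.cong)
    moreover have "G (x(b := v, a := u)) = G x" using assms by (intro G) auto
    ultimately show ?thesis using assms(2) by (simp add: F_def)
  qed
  have "(\<Sum>x\<in>PiE (insert a (insert b I)) (\<lambda>_. U). F x)
      = (\<Sum>u\<in>U. \<Sum>v\<in>U. \<Sum>x\<in>PiE I (\<lambda>_. U). F (x(b := v, a := u)))"
    using assms by (simp add: sum_PiE_insert)
  also have "\<dots> = (\<Sum>u\<in>U. \<Sum>v\<in>U. q u * q v * \<phi> u v * (\<Sum>x\<in>PiE I (\<lambda>_. U). (\<Prod>j\<in>I. q (x j)) * G x))"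
    by (simp add: upd sum_distrib_left)
  also have "\<dots> = pair_mean U q \<phi> * (\<Sum>x\<in>PiE I (\<lambda>_. U). (\<Prod>j\<in>I. q (x j)) * G x)"
    by (simp add: pair_mean_def sum_distrib_right)
  finally show ?thesis unfolding F_def .
qed

text \<open>The factor \<open>G\<close>, which only depends on the coordinates in \<open>I\<close>, is what lets the
  induction over the pairs go through.\<close>

lemma sum_PiE_pairs_factor:
  fixes q :: "'a \<Rightarrow> real" and \<pi> :: "nat \<Rightarrow> nat"
  assumes "inj_on \<pi> {..<2*r}" "finite I" "\<pi> ` {..<2*r} \<inter> I = {}"
    and "\<And>x y. (\<And>i. i \<in> I \<Longrightarrow> x i = y i) \<Longrightarrow> G x = G y"
  shows "(\<Sum>x\<in>PiE (\<pi> ` {..<2*r} \<union> I) (\<lambda>_. U).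
           (\<Prod>j\<in>\<pi> ` {..<2*r} \<union> I. q (x j)) * ((\<Prod>k<r. \<phi> (x (\<pi> (2*k))) (x (\<pi> (2*k+1)))) * G x))
       = pair_mean U q \<phi> ^ r * (\<Sum>x\<in>PiE I (\<lambda>_. U). (\<Prod>j\<in>I. q (x j)) * G x)"
  using assms
proof (induction r arbitrary: I G)
  case 0
  show ?case by simp
next
  case (Suc r)
  let ?A = "{..<2*r}"
  define a b where "a = \<pi> (2*r)" and "b = \<pi> (2*r+1)"
  define I' where "I' = insert a (insert b I)"
  define G' where "G' x = \<phi> (x a) (x b) * G x" for x
  have inj: "inj_on \<pi> ?A" using Suc.prems(1) by (rule inj_on_subset) auto
  have ab: "a \<noteq> b" "a \<notin> \<pi> ` ?A" "b \<notin> \<pi> ` ?A"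
    unfolding a_def b_def
    by (auto simp: inj_on_image_mem_iff[OF Suc.prems(1)] inj_on_eq_iff[OF Suc.prems(1)])
  have "2*r \<in> {..<2 * Suc r}" "2*r+1 \<in> {..<2 * Suc r}" by auto
  then have abI: "a \<notin> I" "b \<notin> I" using Suc.prems(3) unfolding a_def b_def by blast+
  have "{..<2 * Suc r} = insert (2*r) (insert (2*r+1) ?A)" by auto
  then have split: "\<pi> ` {..<2 * Suc r} \<union> I = \<pi> ` ?A \<union> I'"
    unfolding I'_def a_def b_def by auto
  have "\<pi> ` ?A \<subseteq> \<pi> ` {..<2 * Suc r}" by auto
  then have disj: "\<pi> ` ?A \<inter> I' = {}" using Suc.prems(3) ab unfolding I'_def by blast
  have G': "G' x = G' y" if "\<And>i. i \<in> I' \<Longrightarrow> x i = y i" for x y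
    using that Suc.prems(4)[of x y] unfolding G'_def I'_def by auto
  have fin: "finite I'" unfolding I'_def using Suc.prems(2) by simp
  have pairs: "(\<Prod>k<Suc r. \<phi> (x (\<pi> (2*k))) (x (\<pi> (2*k+1)))) * G x
      = (\<Prod>k<r. \<phi> (x (\<pi> (2*k))) (x (\<pi> (2*k+1)))) * G' x" for x
    unfolding G'_def a_def b_def by (simp add: mult.assoc)
  have "(\<Sum>x\<in>PiE (\<pi> ` {..<2 * Suc r} \<union> I) (\<lambda>_. U).
           (\<Prod>j\<in>\<pi> ` {..<2 * Suc r} \<union> I. q (x j)) * ((\<Prod>k<Suc r. \<phi> (x (\<pi> (2*k))) (x (\<pi> (2*k+1)))) * G x))
     = pair_mean U q \<phi> ^ r * (\<Sum>x\<in>PiE I' (\<lambda>_. U). (\<Prod>j\<in>I'. q (x j)) * G' x)"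
    unfolding split pairs by (rule Suc.IH[OF inj fin disj G'])
  also have "(\<Sum>x\<in>PiE I' (\<lambda>_. U). (\<Prod>j\<in>I'. q (x j)) * G' x)
     = pair_mean U q \<phi> * (\<Sum>x\<in>PiE I (\<lambda>_. U). (\<Prod>j\<in>I. q (x j)) * G x)"
    unfolding I'_def G'_def by (rule sum_PiE_pair_factor[OF Suc.prems(2) ab(1) abI Suc.prems(4)])
  finally show ?case by (simp add: mult.assoc)
qed

lemma sum_permutes_pair_eq:
  fixes g :: "'a \<Rightarrow> 'a \<Rightarrow> 'b::comm_monoid_add"
  assumes "a \<in> S" "b \<in> S" "a \<noteq> b" "c \<in> S" "d \<in> S" "c \<noteq> d"
  shows "(\<Sum>\<sigma> | \<sigma> permutes S. g (\<sigma> a) (\<sigma> b)) = (\<Sum>\<sigma> | \<sigma> permutes S. g (\<sigma> c) (\<sigma> d))"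
proof -
  define \<tau> where "\<tau> = Transposition.transpose a c"
  define \<pi> where "\<pi> = Transposition.transpose b (\<tau> d) \<circ> \<tau>"
  have "\<tau> d \<noteq> a" "\<tau> d \<in> S" using assms unfolding \<tau>_def by (auto simp: Transposition.transpose_def)
  then have "\<pi> permutes S" "\<pi> c = a" "\<pi> d = b"
    using assms unfolding \<pi>_def \<tau>_def by (auto intro!: permutes_compose permutes_swap_id)
  then show ?thesis
    using sum_permutations_compose_right[of \<pi> S "\<lambda>\<sigma>. g (\<sigma> c) (\<sigma> d)"] by simp
qed

lemma sum_offdiag_permute:
  assumes "\<sigma> permutes S"
  shows "(\<Sum>j\<in>S. \<Sum>l\<in>S-{j}. g (\<sigma> j) (\<sigma> l)) = (\<Sum>j\<in>S. \<Sum>l\<in>S-{j}. g j l)"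
proof -
  have "(\<Sum>l\<in>S-{j}. g (\<sigma> j) (\<sigma> l)) = (\<Sum>l\<in>S-{\<sigma> j}. g (\<sigma> j) l)" for j
  proof -
    have "\<sigma> ` (S-{j}) = S-{\<sigma> j}"
      using permutes_image[OF assms] permutes_inj[OF assms] by (auto simp: inj_eq)
    then show ?thesis
      using sum.reindex[OF permutes_inj_on[OF assms], of "g (\<sigma> j)" "S-{j}"] by simp
  qed
  then show ?thesis
    using sum.permute[OF assms, of "\<lambda>j. \<Sum>l\<in>S-{j}. g j l"] by (simp add: comp_def)
qed

lemma sum_permutes_pair:
  fixes g :: "'a \<Rightarrow> 'a \<Rightarrow> real"
  assumes "finite S" "a \<in> S" "b \<in> S" "a \<noteq> b"
  shows "real (card S) * (real (card S) - 1) * (\<Sum>\<sigma> | \<sigma> permutes S. g (\<sigma> a) (\<sigma> b))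
       = fact (card S) * (\<Sum>j\<in>S. \<Sum>l\<in>S-{j}. g j l)"
proof -
  let ?P = "{\<sigma>. \<sigma> permutes S}"
  have "card S \<ge> 1" using assms by (auto simp: Suc_le_eq card_gt_0_iff)
  have "(\<Sum>j\<in>S. \<Sum>l\<in>S-{j}. \<Sum>\<sigma>\<in>?P. g (\<sigma> j) (\<sigma> l))
      = (\<Sum>j\<in>S. \<Sum>l\<in>S-{j}. \<Sum>\<sigma>\<in>?P. g (\<sigma> a) (\<sigma> b))"
    using assms by (intro sum.cong refl sum_permutes_pair_eq) auto
  also have "\<dots> = real (card S) * (real (card S) - 1) * (\<Sum>\<sigma>\<in>?P. g (\<sigma> a) (\<sigma> b))"
    using assms \<open>card S \<ge> 1\<close> by (simp add: card_Diff_singleton of_nat_diff)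
  finally have "real (card S) * (real (card S) - 1) * (\<Sum>\<sigma>\<in>?P. g (\<sigma> a) (\<sigma> b))
      = (\<Sum>\<sigma>\<in>?P. \<Sum>j\<in>S. \<Sum>l\<in>S-{j}. g (\<sigma> j) (\<sigma> l))"
    by (simp add: sum.swap[of _ ?P] sum.swap[of _ ?P "S - _"])
  also have "\<dots> = (\<Sum>\<sigma>\<in>?P. \<Sum>j\<in>S. \<Sum>l\<in>S-{j}. g j l)"
    by (intro sum.cong refl sum_offdiag_permute) simp
  also have "\<dots> = fact (card S) * (\<Sum>j\<in>S. \<Sum>l\<in>S-{j}. g j l)"
    using card_permutations[OF refl assms(1)] by simp
  finally show ?thesis .
qed

lemma expect_prod_add: "expect_prod U q m (\<lambda>x. g x + g' x) = expect_prod U q m g + expect_prod U q m g'"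
  unfolding expect_prod_def by (simp add: distrib_left sum.distrib)

lemma expect_prod_mono:
  assumes "\<And>u. u \<in> U \<Longrightarrow> 0 \<le> q u" "\<And>x. x \<in> PiE {..<m} (\<lambda>_. U) \<Longrightarrow> g x \<le> g' x"
  shows "expect_prod U q m g \<le> expect_prod U q m g'"
  unfolding expect_prod_def using assms
  by (intro sum_mono mult_left_mono prod_nonneg) (auto simp: PiE_mem)

lemma expect_prod_cmult: "expect_prod U q m (\<lambda>x. c * g x) = c * expect_prod U q m g"
  unfolding expect_prod_def by (simp add: sum_distrib_left mult.left_commute)

lemma expect_prod_sum:
  "expect_prod U q m (\<lambda>x. \<Sum>i\<in>I. g i x) = (\<Sum>i\<in>I. expect_prod U q m (g i))"
  unfolding expect_prod_def by (simp add: sum_distrib_left sum.swap[of _ I])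

lemma prob_prod_eq_expect_prod:
  assumes "finite U"
  shows "prob_prod U q m E = expect_prod U q m (\<lambda>x. if E x then 1 else 0)"
  unfolding prob_prod_def expect_prod_def using assms
  by (simp add: sum.inter_filter finite_PiE if_distrib cong: if_cong)

lemma prob_prod_compl:
  assumes "finite U" "(\<Sum>u\<in>U. q u) = 1"
  shows "prob_prod U q m E = 1 - prob_prod U q m (\<lambda>x. \<not> E x)"
proof -
  have "prob_prod U q m E + prob_prod U q m (\<lambda>x. \<not> E x)
      = expect_prod U q m (\<lambda>x. (if E x then 1 else 0) + (if \<not> E x then 1 else 0))"
    unfolding prob_prod_eq_expect_prod[OF assms(1)] expect_prod_add ..
  also have "\<dots> = expect_prod U q m (\<lambda>_. 1)"
    by (rule arg_cong[where f = "expect_prod U q m"]) auto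
  also have "\<dots> = 1"
    unfolding expect_prod_def using prod_sum_PiE[of "{..<m}" "\<lambda>_. U" "\<lambda>_ u. q u"] assms by simp
  finally show ?thesis by simp
qed

lemma ustat_hoeffding_decomposition:
  assumes "2 \<le> m" "2 * r \<le> m"
  shows "real r * ustat m f x
       = (\<Sum>\<sigma> | \<sigma> permutes {..<m}. \<Sum>k<r. f (x (\<sigma> (2*k))) (x (\<sigma> (2*k+1)))) / fact m"
proof -
  let ?P = "{\<sigma>. \<sigma> permutes {..<m}}"
  let ?K = "\<Sum>j<m. \<Sum>l\<in>{..<m}-{j}. f (x j) (x l)"
  have pair: "real m * (real m - 1) * (\<Sum>\<sigma>\<in>?P. f (x (\<sigma> (2*k))) (x (\<sigma> (2*k+1)))) = fact m * ?K"
    if "k \<in> {..<r}" for k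
    using sum_permutes_pair[of "{..<m}" "2*k" "2*k+1" "\<lambda>j l. f (x j) (x l)"] that assms by simp
  have "real m * (real m - 1) * (\<Sum>\<sigma>\<in>?P. \<Sum>k<r. f (x (\<sigma> (2*k))) (x (\<sigma> (2*k+1))))
      = (\<Sum>k<r. real m * (real m - 1) * (\<Sum>\<sigma>\<in>?P. f (x (\<sigma> (2*k))) (x (\<sigma> (2*k+1)))))"
    by (simp add: sum.swap[of _ ?P] sum_distrib_left)
  also have "\<dots> = (\<Sum>k<r. fact m * ?K)"
    by (rule sum.cong[OF refl pair])
  also have "\<dots> = real r * fact m * ?K"
    by simp
  finally show ?thesis
    using assms(1) unfolding ustat_def by (simp add: field_simps)
qed

lemma expect_prod_permuted_pairs:
  assumes "finite U" "(\<Sum>u\<in>U. q u) = 1" "\<sigma> permutes {..<m}" "2 * r \<le> m"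
  shows "expect_prod U q m (\<lambda>x. \<Prod>k<r. \<phi> (x (\<sigma> (2*k))) (x (\<sigma> (2*k+1)))) = pair_mean U q \<phi> ^ r"
proof -
  define I where "I = {..<m} - \<sigma> ` {..<2*r}"
  have "\<sigma> ` {..<2*r} \<subseteq> {..<m}"
    using permutes_image[OF assms(3)] assms(4) by auto
  then have split: "\<sigma> ` {..<2*r} \<union> I = {..<m}" unfolding I_def by auto
  have "expect_prod U q m (\<lambda>x. \<Prod>k<r. \<phi> (x (\<sigma> (2*k))) (x (\<sigma> (2*k+1))))
      = (\<Sum>x\<in>PiE (\<sigma> ` {..<2*r} \<union> I) (\<lambda>_. U).
           (\<Prod>j\<in>\<sigma> ` {..<2*r} \<union> I. q (x j)) * ((\<Prod>k<r. \<phi> (x (\<sigma> (2*k))) (x (\<sigma> (2*k+1)))) * 1))"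
    unfolding split expect_prod_def by simp
  also have "\<dots> = pair_mean U q \<phi> ^ r * (\<Sum>x\<in>PiE I (\<lambda>_. U). (\<Prod>j\<in>I. q (x j)) * 1)"
    unfolding I_def by (rule sum_PiE_pairs_factor) (auto intro: permutes_inj_on[OF assms(3)])
  also have "(\<Sum>x\<in>PiE I (\<lambda>_. U). (\<Prod>j\<in>I. q (x j)) * 1) = 1"
    using prod_sum_PiE[of I "\<lambda>_. U" "\<lambda>_ u. q u"] assms(1,2) unfolding I_def by simp
  finally show ?thesis by simp
qed

lemma pair_mean_exp_le:
  assumes "(\<Sum>u\<in>U. q u) = 1" "\<And>u v. f u v = 0 \<or> f u v = 1"
  shows "pair_mean U q (\<lambda>u v. exp (\<theta> * (f u v - pair_mean U q f)))
       \<le> exp (pair_mean U q f * (exp \<theta> - 1 - \<theta>))"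
proof -
  define s where "s = pair_mean U q f"
  define E where "E = exp (- \<theta> * s)"
  have bernoulli: "exp (\<theta> * (f u v - s)) = E + E * (exp \<theta> - 1) * f u v" for u v
    using assms(2)[of u v] unfolding E_def by (auto simp: exp_add[symmetric] algebra_simps)
  have "pair_mean U q (\<lambda>u v. 1) = 1"
    unfolding pair_mean_def using assms(1) by (simp add: sum_product[symmetric])
  moreover have "pair_mean U q (\<lambda>u v. exp (\<theta> * (f u v - s)))
      = E * pair_mean U q (\<lambda>u v. 1) + E * (exp \<theta> - 1) * s"
    unfolding pair_mean_def bernoulli
    by (simp add: s_def pair_mean_def distrib_left sum.distrib sum_distrib_left mult_ac)
  ultimately have "pair_mean U q (\<lambda>u v. exp (\<theta> * (f u v - s))) = E * (1 + (exp \<theta> - 1) * s)"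
    by (simp add: algebra_simps)
  also have "\<dots> \<le> E * exp ((exp \<theta> - 1) * s)"
    unfolding E_def by (intro mult_left_mono exp_ge_add_one_self) simp
  also have "\<dots> = exp (s * (exp \<theta> - 1 - \<theta>))"
    unfolding E_def by (simp add: exp_add[symmetric] algebra_simps)
  finally show ?thesis unfolding s_def .
qed

lemma ustat_mgf_le:
  fixes m r :: nat and \<theta> :: real
  assumes "finite U" "\<And>u. u \<in> U \<Longrightarrow> 0 \<le> q u" "(\<Sum>u\<in>U. q u) = 1"
    and "\<And>u v. f u v = 0 \<or> f u v = 1" "2 \<le> m" "2 * r \<le> m"
  shows "expect_prod U q m (\<lambda>x. exp (\<theta> * r * (ustat m f x - pair_mean U q f)))
       \<le> exp (r * pair_mean U q f * (exp \<theta> - 1 - \<theta>))"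
proof -
  define s where "s = pair_mean U q f"
  define \<phi> where "\<phi> u v = exp (\<theta> * (f u v - s))" for u v
  define S where "S \<sigma> x = (\<Sum>k<r. f (x (\<sigma> (2*k))) (x (\<sigma> (2*k+1))))"
    for \<sigma> :: "nat \<Rightarrow> nat" and x :: "nat \<Rightarrow> 'a"
  define Z where "Z \<sigma> x = \<theta> * (S \<sigma> x - real r * s)" for \<sigma> x
  let ?P = "{\<sigma>. \<sigma> permutes {..<m}}"
  let ?w = "1 / fact m :: real"
  have card: "card ?P = fact m" and fin: "finite ?P"
    by (simp_all add: card_permutations finite_permutations)
  have "?P \<noteq> {}" using permutes_id by blast
  have avg: "\<theta> * r * (ustat m f x - s) = (\<Sum>\<sigma>\<in>?P. ?w * Z \<sigma> x)" for x
  proof -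
    have "(\<Sum>\<sigma>\<in>?P. ?w * Z \<sigma> x) = ?w * \<theta> * (\<Sum>\<sigma>\<in>?P. S \<sigma> x) - ?w * \<theta> * (\<Sum>\<sigma>\<in>?P. r * s)"
      unfolding Z_def by (simp add: sum_subtractf sum_distrib_left algebra_simps)
    also have "\<dots> = \<theta> * ((\<Sum>\<sigma>\<in>?P. S \<sigma> x) / fact m - r * s)"
      using card by (simp add: field_simps)
    also have "\<dots> = \<theta> * r * (ustat m f x - s)"
      unfolding S_def ustat_hoeffding_decomposition[OF assms(5,6), symmetric] by (simp add: algebra_simps)
    finally show ?thesis ..
  qed
  have jensen: "exp (\<Sum>\<sigma>\<in>?P. ?w * Z \<sigma> x) \<le> (\<Sum>\<sigma>\<in>?P. ?w * exp (Z \<sigma> x))" for x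
    using convex_on_sum[OF fin \<open>?P \<noteq> {}\<close> exp_convex, of "\<lambda>_. ?w" "\<lambda>\<sigma>. Z \<sigma> x"] card by simp
  have pairs: "exp (Z \<sigma> x) = (\<Prod>k<r. \<phi> (x (\<sigma> (2*k))) (x (\<sigma> (2*k+1))))" for \<sigma> x
    unfolding Z_def S_def \<phi>_def
    by (simp add: exp_sum[symmetric] sum_subtractf sum_distrib_left right_diff_distrib)
  have "expect_prod U q m (\<lambda>x. exp (\<theta> * r * (ustat m f x - s)))
      \<le> expect_prod U q m (\<lambda>x. \<Sum>\<sigma>\<in>?P. ?w * exp (Z \<sigma> x))"
    unfolding avg using jensen assms(2) by (intro expect_prod_mono) auto
  also have "\<dots> = (\<Sum>\<sigma>\<in>?P. ?w * pair_mean U q \<phi> ^ r)"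
    unfolding expect_prod_sum expect_prod_cmult pairs
    using expect_prod_permuted_pairs[OF assms(1,3) _ assms(6)] by simp
  also have "\<dots> = pair_mean U q \<phi> ^ r"
    using card by simp
  also have "\<dots> \<le> exp (s * (exp \<theta> - 1 - \<theta>)) ^ r"
    unfolding \<phi>_def s_def using assms(2-4)
    by (intro power_mono pair_mean_exp_le) (auto simp: pair_mean_def intro!: sum_nonneg)
  also have "\<dots> = exp (r * s * (exp \<theta> - 1 - \<theta>))"
    by (simp add: exp_of_nat_mult[symmetric] mult.assoc)
  finally show ?thesis unfolding s_def .
qed

lemma prob_prod_two_sided_chernoff:
  fixes \<theta> :: real
  assumes "finite U" "\<And>u. u \<in> U \<Longrightarrow> 0 \<le> q u" "0 \<le> \<theta>"
    and "expect_prod U q m (\<lambda>x. exp (\<theta> * (Z x - \<mu>))) \<le> B"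
    and "expect_prod U q m (\<lambda>x. exp (- \<theta> * (Z x - \<mu>))) \<le> B"
  shows "prob_prod U q m (\<lambda>x. a < \<bar>Z x - \<mu>\<bar>) \<le> 2 * exp (- \<theta> * a) * B"
proof -
  have markov: "(if a < \<bar>y\<bar> then 1 else 0) \<le> exp (- \<theta> * a) * (exp (\<theta> * y) + exp (- \<theta> * y))"
    for y :: real
  proof (cases "a < \<bar>y\<bar>")
    case True
    then have "0 \<le> \<theta> * y - \<theta> * a \<or> 0 \<le> - \<theta> * y - \<theta> * a"
      using assms(3) mult_left_mono[of a "\<bar>y\<bar>" \<theta>] by (auto simp: abs_if split: if_splits)
    then have "1 \<le> exp (\<theta> * y - \<theta> * a) + exp (- \<theta> * y - \<theta> * a)"
      by (smt (verit) exp_ge_zero one_le_exp_iff)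
    then show ?thesis
      using True by (simp add: exp_diff exp_minus field_simps)
  qed simp
  have "prob_prod U q m (\<lambda>x. a < \<bar>Z x - \<mu>\<bar>)
      \<le> expect_prod U q m (\<lambda>x. exp (- \<theta> * a) * (exp (\<theta> * (Z x - \<mu>)) + exp (- \<theta> * (Z x - \<mu>))))"
    unfolding prob_prod_eq_expect_prod[OF assms(1)] using assms(2) markov by (intro expect_prod_mono)
  also have "\<dots> \<le> exp (- \<theta> * a) * (B + B)"
    unfolding expect_prod_cmult expect_prod_add using assms(4,5) by (intro mult_left_mono add_mono) auto
  finally show ?thesis by simp
qed

lemma exp_minus_one_minus_le_sq:
  fixes \<theta> :: real
  assumes "\<bar>\<theta>\<bar> \<le> 1"
  shows "exp \<theta> - 1 - \<theta> \<le> \<theta>\<^sup>2"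
proof (cases "0 \<le> \<theta>")
  case True
  then show ?thesis using exp_bound[of \<theta>] assms by simp
next
  case False
  have "0 \<le> 1 + \<theta> + \<theta>\<^sup>2"
    using assms zero_le_power2[of \<theta>] by arith
  then have "exp (- \<theta>) * (1 + \<theta> + \<theta>\<^sup>2) \<ge> (1 - \<theta>) * (1 + \<theta> + \<theta>\<^sup>2)"
    using exp_ge_add_one_self[of "- \<theta>"] by (intro mult_right_mono) auto
  moreover have "(1 - \<theta>) * (1 + \<theta> + \<theta>\<^sup>2) = 1 - \<theta> * \<theta>\<^sup>2"
    by (simp add: algebra_simps power2_eq_square)
  moreover have "\<theta> * \<theta>\<^sup>2 \<le> 0"
    using False by (simp add: mult_nonpos_nonneg)
  ultimately have "exp (- \<theta>) * (1 + \<theta> + \<theta>\<^sup>2) \<ge> 1" by linarith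
  then show ?thesis by (simp add: exp_minus field_simps)
qed

lemma ustat_tail_bound:
  fixes m r :: nat and t :: real
  assumes "finite U" "\<And>u. u \<in> U \<Longrightarrow> 0 \<le> q u" "(\<Sum>u\<in>U. q u) = 1"
    and "\<And>u v. f u v = 0 \<or> f u v = 1" "2 \<le> m" "2 * r \<le> m" "0 \<le> t" "t \<le> 3"
  shows "prob_prod U q m (\<lambda>x. t * pair_mean U q f < \<bar>ustat m f x - pair_mean U q f\<bar>)
       \<le> 2 * exp (- (2/9) * r * pair_mean U q f * t\<^sup>2)"
proof -
  define s where "s = pair_mean U q f"
  \<comment> \<open>\<open>|\<theta>| \<le> 1\<close> for \<open>t \<le> 3\<close>, and \<open>r s (\<theta>\<^sup>2 - \<theta> t) = -(2/9) r s t\<^sup>2\<close>\<close>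
  define \<theta> where "\<theta> = t / 3"
  have "0 \<le> f u v" for u v using assms(4)[of u v] by auto
  then have "0 \<le> s" unfolding s_def pair_mean_def using assms(2) by (auto intro!: sum_nonneg)
  have mgf: "expect_prod U q m (\<lambda>x. exp (\<theta>' * r * (ustat m f x - s))) \<le> exp (r * s * \<theta>\<^sup>2)"
    if "\<theta>' = \<theta> \<or> \<theta>' = - \<theta>" for \<theta>' :: real
  proof -
    have "exp \<theta>' - 1 - \<theta>' \<le> \<theta>\<^sup>2"
      using that assms(7,8) exp_minus_one_minus_le_sq[of \<theta>'] unfolding \<theta>_def by auto
    have "expect_prod U q m (\<lambda>x. exp (\<theta>' * r * (ustat m f x - s))) \<le> exp (r * s * (exp \<theta>' - 1 - \<theta>'))"
      unfolding s_def by (rule ustat_mgf_le) (use assms in auto)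
    also have "\<dots> \<le> exp (r * s * \<theta>\<^sup>2)"
      using \<open>0 \<le> s\<close> \<open>exp \<theta>' - 1 - \<theta>' \<le> \<theta>\<^sup>2\<close> by (simp add: mult_left_mono)
    finally show ?thesis .
  qed
  have "prob_prod U q m (\<lambda>x. t * s < \<bar>ustat m f x - s\<bar>) \<le> 2 * exp (- (\<theta> * r) * (t * s)) * exp (r * s * \<theta>\<^sup>2)"
    using mgf[of \<theta>] mgf[of "- \<theta>"] assms(7)
    by (intro prob_prod_two_sided_chernoff[OF assms(1,2)]) (auto simp: \<theta>_def)
  also have "\<dots> = 2 * exp (- (2/9) * r * s * t\<^sup>2)"
    by (simp add: exp_add[symmetric] \<theta>_def power2_eq_square field_simps)
  finally show ?thesis unfolding s_def .
qed

lemma sum_offdiag_idempotent: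
  fixes a :: "'i \<Rightarrow> real"
  assumes "finite S" "\<And>j. j \<in> S \<Longrightarrow> a j * a j = a j"
  shows "(\<Sum>j\<in>S. a j) * ((\<Sum>j\<in>S. a j) - 1) = (\<Sum>j\<in>S. \<Sum>l\<in>S-{j}. a j * a l)"
proof -
  have "(\<Sum>j\<in>S. \<Sum>l\<in>S-{j}. a j * a l) = (\<Sum>j\<in>S. (\<Sum>l\<in>S. a j * a l) - a j)"
    using assms by (intro sum.cong refl) (simp add: sum.remove)
  also have "\<dots> = (\<Sum>j\<in>S. a j) * (\<Sum>j\<in>S. a j) - (\<Sum>j\<in>S. a j)"
    by (simp add: sum_subtractf sum_product)
  finally show ?thesis by (simp add: algebra_simps)
qed

lemma sum_load_pairs_eq_ustat:
  assumes "\<And>u. u \<in> U \<Longrightarrow> h u \<in> {1..n}" "x \<in> PiE {..<m} (\<lambda>_. U)"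
  shows "(\<Sum>i=1..n. real (load h m x i) * (real (load h m x i) - 1) / (real m * (real m - 1)))
       = ustat m (\<lambda>u v. if h u = h v then 1 else 0) x"
proof -
  define a where "a i j = (if h (x j) = i then 1 else 0 :: real)" for i j
  have load: "real (load h m x i) = (\<Sum>j<m. a i j)" for i
    unfolding load_def a_def by (simp add: sum.inter_filter[symmetric])
  have collision: "(\<Sum>i=1..n. a i j * a i l) = (if h (x j) = h (x l) then 1 else 0)" if "j < m" for j l
  proof -
    have "(\<Sum>i=1..n. a i j * a i l) = (\<Sum>i=1..n. if i = h (x j) then a i l else 0)"
      by (intro sum.cong) (auto simp: a_def)
    moreover have "h (x j) \<in> {1..n}" using assms that by (auto simp: PiE_mem)
    ultimately show ?thesis unfolding a_def by auto
  qed
  have "(\<Sum>i=1..n. real (load h m x i) * (real (load h m x i) - 1))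
      = (\<Sum>i=1..n. \<Sum>j<m. \<Sum>l\<in>{..<m}-{j}. a i j * a i l)"
    unfolding load by (intro sum.cong refl sum_offdiag_idempotent) (auto simp: a_def)
  also have "\<dots> = (\<Sum>j<m. \<Sum>l\<in>{..<m}-{j}. \<Sum>i=1..n. a i j * a i l)"
    by (subst sum.swap, rule sum.cong[OF refl], rule sum.swap)
  also have "\<dots> = (\<Sum>j<m. \<Sum>l\<in>{..<m}-{j}. if h (x j) = h (x l) then 1 else 0)"
    by (intro sum.cong refl collision) simp
  finally show ?thesis
    unfolding ustat_def by (simp add: sum_divide_distrib[symmetric])
qed

lemma sum_bucket_prob:
  assumes "finite U" "\<And>u. u \<in> U \<Longrightarrow> h u \<in> {1..n}"
  shows "(\<Sum>i=1..n. bucket_prob U q h i) = (\<Sum>u\<in>U. q u)"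
  unfolding bucket_prob_def using assms by (intro sum.group) auto

lemma sq_norm_p_eq_pair_mean:
  assumes "finite U" "\<And>u. u \<in> U \<Longrightarrow> h u \<in> {1..n}"
  shows "sq_norm_p U q h n = pair_mean U q (\<lambda>u v. if h u = h v then 1 else 0)"
proof -
  have "sq_norm_p U q h n = (\<Sum>i=1..n. \<Sum>u\<in>{u\<in>U. h u = i}. q u * bucket_prob U q h i)"
    unfolding sq_norm_p_def power2_eq_square by (simp add: bucket_prob_def sum_distrib_right)
  also have "\<dots> = (\<Sum>i=1..n. \<Sum>u\<in>{u\<in>U. h u = i}. q u * bucket_prob U q h (h u))"
    by (intro sum.cong refl) auto
  also have "\<dots> = (\<Sum>u\<in>U. q u * bucket_prob U q h (h u))"
    using assms by (intro sum.group) auto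
  also have "\<dots> = pair_mean U q (\<lambda>u v. if h u = h v then 1 else 0)"
    unfolding pair_mean_def bucket_prob_def using assms(1)
    by (simp add: sum.inter_filter sum_distrib_left if_distrib eq_commute cong: if_cong)
  finally show ?thesis .
qed

lemma sq_norm_p_ge_inverse:
  assumes "finite U" "(\<Sum>u\<in>U. q u) = 1" "\<And>u. u \<in> U \<Longrightarrow> h u \<in> {1..n}"
  shows "1 / real n \<le> sq_norm_p U q h n"
proof -
  have "1 = (\<Sum>i=1..n. bucket_prob U q h i)\<^sup>2"
    using sum_bucket_prob[OF assms(1,3)] assms(2) by simp
  also have "\<dots> \<le> sq_norm_p U q h n * real n"
    unfolding sq_norm_p_def using sum_squared_le_sum_of_squares[of "bucket_prob U q h" "{1..n}"] by simp
  finally have "1 \<le> sq_norm_p U q h n * real n" .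
  then show ?thesis
    by (cases "n = 0") (simp_all add: field_simps)
qed

lemma tail_exponent_estimate:
  fixes n P X r s t :: real
  assumes "24 < n" "3 < P" "1 < X" "(n * P * X - 1) / 2 \<le> r" "1 / n \<le> s" "t\<^sup>2 = 484 / (25 * P)"
  shows "2 * exp (- (2/9) * r * s * t\<^sup>2) \<le> 10/9 * exp (- X)"
proof -
  have "72 < n * P" using mult_strict_mono[of 24 n 3 P] assms(1,2) by simp
  then have "72 < n * P * X" using mult_strict_mono[of 72 "n * P" 1 X] assms(3) by simp
  then have "(n * P * X - 1) / 2 * (1 / n) \<le> r * s"
    using assms(1,4,5) by (intro mult_mono) auto
  define y where "y = 1 / (n * P)"
  have "y \<le> 1 / 72" unfolding y_def using \<open>72 < n * P\<close> by (simp add: frac_le)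
  have "484/225 * X - 484/225 * y = (2/9) * ((n * P * X - 1) / 2 * (1 / n)) * (484 / (25 * P))"
    unfolding y_def using assms(1,2) by (simp add: field_simps)
  also have "\<dots> \<le> (2/9) * (r * s) * t\<^sup>2"
    unfolding assms(6) using assms(2) \<open>(n * P * X - 1) / 2 * (1 / n) \<le> r * s\<close>
    by (intro mult_right_mono mult_left_mono) auto
  finally have "X + 1 \<le> (2/9) * r * s * t\<^sup>2"
    using assms(3) \<open>y \<le> 1 / 72\<close> by (simp only: mult.assoc)
  then have "exp (- (2/9) * r * s * t\<^sup>2) \<le> exp (- X) * exp (- 1)"
    by (simp flip: exp_add)
  also have "\<dots> \<le> exp (- X) * (1/2)"
    using exp_ge_add_one_self[of 1] by (intro mult_left_mono) (simp_all add: exp_minus field_simps)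
  finally show ?thesis
    using exp_ge_zero[of "- X"] by linarith
qed

lemma corollary3_parameter_estimates:
  fixes n m :: nat and \<beta> lam :: real
  assumes "24 < n" "ln 3 / ln n < \<beta>" "1/2 < lam" "real m = real n powr (1/2 + \<beta> + lam)"
  defines "t \<equiv> 22/5 * real n powr (-\<beta>/2)"
  shows "t \<le> 3" "2 \<le> m"
    and "\<And>s. 1 / real n \<le> s \<Longrightarrow>
      2 * exp (- (2/9) * real (m div 2) * s * t\<^sup>2) \<le> 10/9 * exp (- (real n powr (lam - 1/2)))"
proof -
  define P X where "P = real n powr \<beta>" and "X = real n powr (lam - 1/2)"
  have "0 < ln (real n)" using assms(1) by simp
  then have "ln 3 < \<beta> * ln (real n)" using assms(2) by (simp add: field_simps)
  then have "3 < P" unfolding P_def powr_def using assms(1) by (simp add: ln_less_cancel_iff[symmetric])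
  have "1 < X" unfolding X_def using assms(1,3) by simp
  have exponent: "1/2 + \<beta> + lam = 1 + \<beta> + (lam - 1/2)" by simp
  have m: "real m = real n * P * X"
    unfolding assms(4) P_def X_def exponent powr_add using assms(1) by simp
  have "(real n powr (\<beta>/2))\<^sup>2 = P"
    unfolding P_def by (simp add: power2_eq_square flip: powr_add)
  then have t2: "t\<^sup>2 = 484 / (25 * P)"
    unfolding t_def using assms(1) by (simp add: power_mult_distrib powr_minus field_simps)
  have "t\<^sup>2 \<le> 3\<^sup>2"
    unfolding t2 using \<open>3 < P\<close> by (simp add: field_simps)
  then show "t \<le> 3"
    by (rule power2_le_imp_le) simp
  have "72 < real m"
    unfolding m using mult_strict_mono[of 72 "real n * P" 1 X] mult_strict_mono[of 24 "real n" 3 P]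
      assms(1) \<open>3 < P\<close> \<open>1 < X\<close> by simp
  then show "2 \<le> m" by simp
  have "real m \<le> 2 * real (m div 2) + 1" by linarith
  then have r: "(real n * P * X - 1) / 2 \<le> real (m div 2)"
    unfolding m[symmetric] by (simp add: field_simps)
  show "2 * exp (- (2/9) * real (m div 2) * s * t\<^sup>2) \<le> 10/9 * exp (- (real n powr (lam - 1/2)))"
    if "1 / real n \<le> s" for s
    using tail_exponent_estimate[OF _ \<open>3 < P\<close> \<open>1 < X\<close> r that t2] assms(1) unfolding X_def by simp
qed

lemma abs_relative_deviation_le_iff:
  fixes y s t :: real
  assumes "0 < s"
  shows "\<bar>y / s - 1\<bar> \<le> t \<longleftrightarrow> \<bar>y - s\<bar> \<le> t * s"
proof -
  have "y / s - 1 = (y - s) / s" using assms by (simp add: field_simps)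
  then show ?thesis using assms by (simp add: pos_divide_le_eq)
qed

theorem corollary3:
  fixes U :: "'a set" and q :: "'a \<Rightarrow> real" and h :: "'a \<Rightarrow> nat"
    and n m :: nat and \<beta> lam :: real
  assumes "finite U"
    and "\<And>u. u \<in> U \<Longrightarrow> q u \<ge> 0"
    and "(\<Sum>u\<in>U. q u) = 1"
    and "\<And>u. u \<in> U \<Longrightarrow> h u \<in> {1..n}"
    and "n > 24"
    and "\<beta> > ln 3 / ln n"
    and "lam > 1/2"
    and "real m = real n powr (1/2 + \<beta> + lam)"
  shows "prob_prod U q m (\<lambda>x.
           \<bar>(\<Sum>i=1..n. real (load h m x i) * (real (load h m x i) - 1) / (real m * (real m - 1)))
              * (1 / sq_norm_p U q h n) - 1\<bar> \<le> 22/5 * real n powr (-\<beta>/2))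
         \<ge> 1 - 10/9 * exp (- (real n powr (lam - 1/2)))"
proof -
  define f where "f u v = (if h u = h v then 1 else 0 :: real)" for u v
  define s where "s = sq_norm_p U q h n"
  define t where "t = 22/5 * real n powr (-\<beta>/2)"
  note estimates = corollary3_parameter_estimates[OF assms(5-8), folded t_def]
  have s: "s = pair_mean U q f" "1 / real n \<le> s"
    unfolding s_def f_def using sq_norm_p_eq_pair_mean[OF assms(1,4)] sq_norm_p_ge_inverse[OF assms(1,3,4)]
    by auto
  have "0 < s" using s(2) assms(5) by (simp add: order_less_le_trans[of 0 "1 / real n"])
  define E where "E x \<longleftrightarrow> \<bar>(\<Sum>i=1..n. real (load h m x i) * (real (load h m x i) - 1)
      / (real m * (real m - 1))) * (1 / s) - 1\<bar> \<le> t" for x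
  have event: "\<not> E x \<longleftrightarrow> t * s < \<bar>ustat m f x - s\<bar>" if "x \<in> PiE {..<m} (\<lambda>_. U)" for x
    using sum_load_pairs_eq_ustat[where h = h, OF assms(4) that] \<open>0 < s\<close> unfolding E_def f_def
    by (simp add: abs_relative_deviation_le_iff not_le)
  have "prob_prod U q m (\<lambda>x. \<not> E x) = prob_prod U q m (\<lambda>x. t * s < \<bar>ustat m f x - s\<bar>)"
    unfolding prob_prod_def by (rule sum.cong) (use event in auto)
  also have "\<dots> \<le> 2 * exp (- (2/9) * real (m div 2) * s * t\<^sup>2)"
    unfolding s(1) by (rule ustat_tail_bound) (use assms estimates in \<open>auto simp: f_def t_def\<close>)
  also have "\<dots> \<le> 10/9 * exp (- (real n powr (lam - 1/2)))"
    by (rule estimates(3)[OF s(2)])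
  finally have "1 - 10/9 * exp (- (real n powr (lam - 1/2))) \<le> prob_prod U q m E"
    using prob_prod_compl[OF assms(1,3), of m E] by linarith
  then show ?thesis
    unfolding E_def s_def t_def .
qed

end
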